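(* Let $\mathcal{A}$ be a unital Banach algebra, let $a, b_n \in \mathcal{A}$ ($n \ge 1$) with $a = \lim_n b_n$ in norm, and suppose that for each $n \ge 1$ every connected component of $\sigma(b_n)$ intersects $\sigma(-b_n)$. Then every connected component of $\sigma(a)$ intersects $\sigma(-a)$. *)

theory Defs
  imports "HOL-Analysis.Analysis"
begin

class complex_banach_algebra = real_normed_algebra_1 + banach +
  fixes scaleC :: "complex \<Rightarrow> 'a \<Rightarrow> 'a"
  assumes scaleC_add_right: "scaleC c (x + y) = scaleC c x + scaleC c y"
    and scaleC_add_left: "scaleC (c + d) x = scaleC c x + scaleC d x"
    and scaleC_scaleC: "scaleC c (scaleC d x) = scaleC (c * d) x"
    and scaleC_one: "scaleC 1 x = x"
    and scaleR_scaleC: "scaleR r x = scaleC (complex_of_real r) x"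
    and norm_scaleC: "norm (scaleC c x) = cmod c * norm x"
    and scaleC_mult_left: "scaleC c x * y = scaleC c (x * y)"
    and scaleC_mult_right: "x * scaleC c y = scaleC c (x * y)"

definition invertible_elem :: "'a::ring_1 \<Rightarrow> bool" where
  "invertible_elem x \<longleftrightarrow> (\<exists>y. x * y = 1 \<and> y * x = 1)"

definition spectrum :: "'a::complex_banach_algebra \<Rightarrow> complex set" where
  "spectrum a = {c. \<not> invertible_elem (a - scaleC c 1)}"

end

theory Submission
  imports Defs
begin

(*
  Suppose the component of z in sigma(a) misses sigma(-a) = -sigma(a).  By Sura-Bura, z has a
  bounded open neighbourhood G whose frontier misses sigma(a) and whose closure misses
  -sigma(a).  The resolvent of a is bounded on the compact set Q = frontier G \<union> -closure G,
  and therefore so is the resolvent of every b_n close to a.  The norm of a resolvent obeys a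
  maximum principle (proved by averaging its Neumann series over roots of unity), so if
  sigma(b_n) missed G, the bound on the frontier would bound the resolvent of b_n at z and put
  z outside sigma(a).  Hence sigma(b_n) meets G.  The component of sigma(b_n) through such a
  point cannot cross the frontier of G, so it lies in G; by hypothesis it contains some nu with
  -nu in sigma(b_n), but -nu lies in Q, where b_n has no spectrum.
*)

section \<open>Complex scalars and inverses in a Banach algebra\<close>

definition of_complex :: "complex \<Rightarrow> 'a::complex_banach_algebra" where
  "of_complex c = scaleC c 1"

lemma scaleC_conv_of_complex: "scaleC c x = of_complex c * x"
  by (simp add: of_complex_def scaleC_mult_left)

lemma of_complex_commute: "x * of_complex c = of_complex c * x"
  by (simp add: of_complex_def scaleC_mult_left scaleC_mult_right)

lemma of_complex_mult: "of_complex (c * d) = of_complex c * of_complex d"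
  by (simp add: of_complex_def scaleC_mult_left scaleC_scaleC)

lemma of_complex_add: "of_complex (c + d) = of_complex c + of_complex d"
  by (simp add: of_complex_def scaleC_add_left)

lemma of_complex_0 [simp]: "of_complex 0 = 0"
  using of_complex_add[of 0 0] by simp

lemma of_complex_1 [simp]: "of_complex 1 = 1"
  by (simp add: of_complex_def scaleC_one)

lemma of_complex_minus: "of_complex (- c) = - of_complex c"
proof -
  have "of_complex c + of_complex (- c) = 0"
    using of_complex_add[of c "- c"] by simp
  then show ?thesis by (rule minus_unique[symmetric])
qed

lemma of_complex_diff: "of_complex (c - d) = of_complex c - of_complex d"
  using of_complex_add[of c "- d"] by (simp add: of_complex_minus)

lemma of_complex_sum: "of_complex (sum f A) = (\<Sum>i\<in>A. of_complex (f i))"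
  by (induction A rule: infinite_finite_induct) (simp_all add: of_complex_add)

lemma of_complex_of_nat: "of_complex (of_nat n) = of_nat n"
  by (induction n) (simp_all add: of_complex_add)

lemma norm_of_complex_mult: "norm (of_complex c * x) = cmod c * norm x"
  by (simp add: scaleC_conv_of_complex[symmetric] norm_scaleC)

lemma norm_of_complex [simp]: "norm (of_complex c :: 'a::complex_banach_algebra) = cmod c"
  using norm_of_complex_mult[of c "1 :: 'a"] by simp

lemma power_of_complex_mult: "(of_complex c * x) ^ k = of_complex (c ^ k) * x ^ k"
proof (induction k)
  case (Suc k)
  have "(of_complex c * x) ^ Suc k = (of_complex c * x) ^ k * (of_complex c * x)"
    by (rule power_Suc2)
  also have "\<dots> = of_complex (c ^ k) * (x ^ k * of_complex c) * x"
    by (simp only: Suc.IH mult.assoc)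
  also have "x ^ k * of_complex c = of_complex c * x ^ k"
    by (rule of_complex_commute)
  finally show ?case
    by (simp only: of_complex_mult power_Suc2 mult.assoc)
qed simp

text \<open>\<open>elem_inverse x\<close> is a junk value unless \<open>x\<close> is invertible, and so is \<open>resolvent x c\<close>
  for \<open>c\<close> in the spectrum.\<close>

definition elem_inverse :: "'a::ring_1 \<Rightarrow> 'a" where
  "elem_inverse x = (THE y. x * y = 1 \<and> y * x = 1)"

lemma elem_inverse_unique:
  fixes x y :: "'a::ring_1"
  assumes "x * y = 1" "y * x = 1"
  shows "elem_inverse x = y"
  unfolding elem_inverse_def
proof (rule the_equality)
  fix y' assume "x * y' = 1 \<and> y' * x = 1"
  then have "y' = (y * x) * y'" using assms by simp
  also have "\<dots> = y" using \<open>x * y' = 1 \<and> y' * x = 1\<close> by (simp add: mult.assoc)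
  finally show "y' = y" .
qed (use assms in simp)

lemma invertible_elemI: "(x::'a::ring_1) * y = 1 \<Longrightarrow> y * x = 1 \<Longrightarrow> invertible_elem x"
  unfolding invertible_elem_def by blast

lemma invertible_elem_inverse:
  "invertible_elem (x::'a::ring_1) \<Longrightarrow> x * elem_inverse x = 1 \<and> elem_inverse x * x = 1"
  unfolding invertible_elem_def using elem_inverse_unique by metis

lemma invertible_elem_uminus: "invertible_elem (- x) \<longleftrightarrow> invertible_elem (x::'a::ring_1)"
  unfolding invertible_elem_def by (metis minus_minus mult_minus_left mult_minus_right)

lemma neumann_series:
  fixes u :: "'a::{real_normed_algebra_1, banach}"
  assumes u: "norm u < 1"
  shows "(1 - u) * (\<Sum>k. u ^ k) = 1" "(\<Sum>k. u ^ k) * (1 - u) = 1"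
    "norm (\<Sum>k. u ^ k) \<le> 1 / (1 - norm u)"
proof -
  have summable: "summable (\<lambda>k. u ^ k)"
    using u by (rule complete_algebra_summable_geometric)
  have telescope: "(\<lambda>k. u ^ k - u ^ Suc k) sums 1"
    using telescope_sums'[OF LIMSEQ_power_zero[OF u]] by simp
  have "(\<lambda>k. (1 - u) * u ^ k) sums ((1 - u) * (\<Sum>k. u ^ k))"
    using summable by (intro sums_mult summable_sums)
  then show "(1 - u) * (\<Sum>k. u ^ k) = 1"
    using telescope by (simp add: left_diff_distrib sums_unique2)
  have "(\<lambda>k. u ^ k * (1 - u)) sums ((\<Sum>k. u ^ k) * (1 - u))"
    using summable by (intro sums_mult2 summable_sums)
  then show "(\<Sum>k. u ^ k) * (1 - u) = 1"
    using telescope by (simp add: right_diff_distrib power_commutes sums_unique2)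
  have "norm (\<Sum>k. u ^ k) \<le> (\<Sum>k. norm u ^ k)"
    using u by (intro norm_suminf_le norm_power_ineq) (simp add: summable_geometric)
  then show "norm (\<Sum>k. u ^ k) \<le> 1 / (1 - norm u)"
    using u by (simp add: suminf_geometric)
qed

lemma elem_inverse_add:
  fixes y r h :: "'a::{real_normed_algebra_1, banach}"
  assumes inv: "y * r = 1" "r * y = 1" and small: "norm (r * h) < 1"
  shows "invertible_elem (y + h)" "elem_inverse (y + h) = (\<Sum>k. (- (r * h)) ^ k) * r"
proof -
  define u where "u = - (r * h)"
  define s where "s = (\<Sum>k. u ^ k)"
  have "norm u < 1" using small by (simp add: u_def)
  note geometric = neumann_series[OF this, folded s_def]
  have factor: "y + h = y * (1 - u)"
    by (simp add: u_def distrib_left mult.assoc[symmetric] inv(1))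
  have "(y + h) * (s * r) = y * ((1 - u) * s) * r"
    unfolding factor by (simp only: mult.assoc)
  then have left: "(y + h) * (s * r) = 1" by (simp add: geometric(1) inv(1))
  have "(s * r) * (y + h) = s * (r * y) * (1 - u)"
    unfolding factor by (simp only: mult.assoc)
  then have right: "(s * r) * (y + h) = 1" by (simp add: geometric(2) inv(2))
  show "invertible_elem (y + h)" using invertible_elemI[OF left right] .
  show "elem_inverse (y + h) = (\<Sum>k. (- (r * h)) ^ k) * r"
    using elem_inverse_unique[OF left right] by (simp add: s_def u_def)
qed

lemma invertible_elem_add_small:
  fixes y r h :: "'a::{real_normed_algebra_1, banach}"
  assumes inv: "y * r = 1" "r * y = 1" and small: "norm h * norm r \<le> 1/2"
  shows "invertible_elem (y + h)" "norm (elem_inverse (y + h)) \<le> 2 * norm r"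
proof -
  have rh: "norm (r * h) \<le> 1/2"
    using norm_mult_ineq[of r h] small by (simp add: mult.commute)
  then have rh': "norm (r * h) < 1" by simp
  then show "invertible_elem (y + h)" by (rule elem_inverse_add(1)[OF inv])
  have "norm (elem_inverse (y + h)) \<le> norm (\<Sum>k. (- (r * h)) ^ k) * norm r"
    unfolding elem_inverse_add(2)[OF inv rh'] by (rule norm_mult_ineq)
  also have "norm (\<Sum>k. (- (r * h)) ^ k) \<le> 1 / (1 - norm (r * h))"
    using neumann_series(3)[of "- (r * h)"] rh' by simp
  also have "\<dots> \<le> 2" using rh by (simp add: field_simps)
  finally show "norm (elem_inverse (y + h)) \<le> 2 * norm r"
    by (simp add: mult_right_mono)
qed

section \<open>The resolvent\<close>

definition resolvent :: "'a::complex_banach_algebra \<Rightarrow> complex \<Rightarrow> 'a" where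
  "resolvent x c = elem_inverse (x - of_complex c)"

lemma in_spectrum_iff: "c \<in> spectrum x \<longleftrightarrow> \<not> invertible_elem (x - of_complex c)"
  by (simp add: spectrum_def of_complex_def)

lemma resolvent_inverse:
  assumes "c \<notin> spectrum x"
  shows "(x - of_complex c) * resolvent x c = 1" "resolvent x c * (x - of_complex c) = 1"
  using invertible_elem_inverse assms by (auto simp: resolvent_def in_spectrum_iff)

lemma norm_resolvent_pos: "c \<notin> spectrum x \<Longrightarrow> norm (resolvent x c) > 0"
  using resolvent_inverse(1) by fastforce

lemma spectrum_uminus: "spectrum (- x) = uminus ` spectrum x"
proof -
  have "c \<in> spectrum (- x) \<longleftrightarrow> - c \<in> spectrum x" for c
  proof -
    have "- x - of_complex c = - (x - of_complex (- c))"
      by (simp add: of_complex_minus)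
    then show ?thesis by (simp only: in_spectrum_iff invertible_elem_uminus)
  qed
  then show ?thesis by (force intro: rev_image_eqI[of "- c" for c])
qed

lemma resolvent_perturb:
  assumes "c \<notin> spectrum x" "norm (x' - x) * norm (resolvent x c) \<le> 1/2"
  shows "c \<notin> spectrum x'" "norm (resolvent x' c) \<le> 2 * norm (resolvent x c)"
proof -
  have "x' - of_complex c = (x - of_complex c) + (x' - x)" by simp
  then show "c \<notin> spectrum x'" "norm (resolvent x' c) \<le> 2 * norm (resolvent x c)"
    using invertible_elem_add_small[OF resolvent_inverse[OF assms(1)] assms(2)]
    by (simp_all add: in_spectrum_iff resolvent_def)
qed

lemma resolvent_identity:
  assumes "c \<notin> spectrum x" "d \<notin> spectrum x"
  shows "resolvent x c - resolvent x d = resolvent x c * of_complex (c - d) * resolvent x d"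
proof -
  have "resolvent x c - resolvent x d
      = resolvent x c * ((x - of_complex d) * resolvent x d)
        - (resolvent x c * (x - of_complex c)) * resolvent x d"
    by (simp add: resolvent_inverse assms)
  also have "\<dots> = resolvent x c * ((x - of_complex d) - (x - of_complex c)) * resolvent x d"
    by (simp add: right_diff_distrib left_diff_distrib mult.assoc)
  finally show ?thesis by (simp add: of_complex_diff)
qed

lemma resolvent_locally_lipschitz:
  assumes d: "d \<notin> spectrum x" and near: "cmod (c - d) * norm (resolvent x d) \<le> 1/2"
  shows "c \<notin> spectrum x"
    "norm (resolvent x c - resolvent x d) \<le> 2 * norm (resolvent x d) ^ 2 * cmod (c - d)"
proof -
  have shift: "(x - of_complex d) + of_complex (d - c) = x - of_complex c"
    by (simp add: of_complex_diff)
  have "norm (of_complex (d - c) :: 'a) * norm (resolvent x d) \<le> 1/2"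
    using near by (simp add: norm_minus_commute)
  note invertible_elem_add_small[OF resolvent_inverse[OF d] this, unfolded shift]
  then have c: "c \<notin> spectrum x" "norm (resolvent x c) \<le> 2 * norm (resolvent x d)"
    by (simp_all add: in_spectrum_iff resolvent_def)
  show "c \<notin> spectrum x" by (fact c(1))
  have "norm (resolvent x c - resolvent x d)
      \<le> norm (resolvent x c) * cmod (c - d) * norm (resolvent x d)"
    unfolding resolvent_identity[OF c(1) d]
    by (metis norm_mult_ineq norm_of_complex_mult mult.assoc)
  also have "\<dots> \<le> 2 * norm (resolvent x d) * cmod (c - d) * norm (resolvent x d)"
    using c(2) by (intro mult_right_mono) auto
  finally show "norm (resolvent x c - resolvent x d) \<le> 2 * norm (resolvent x d) ^ 2 * cmod (c - d)"
    by (simp add: power2_eq_square mult_ac)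
qed

lemma open_resolvent_set: "open (- spectrum x)"
  unfolding open_dist
proof (intro ballI)
  fix d assume "d \<in> - spectrum x"
  then have d: "d \<notin> spectrum x" by simp
  define r where "r = 1 / (2 * norm (resolvent x d))"
  have "r > 0" using norm_resolvent_pos[OF d] by (simp add: r_def)
  moreover have "c \<in> - spectrum x" if "dist c d < r" for c
    using that norm_resolvent_pos[OF d] resolvent_locally_lipschitz(1)[OF d]
    by (simp add: dist_norm r_def field_simps)
  ultimately show "\<exists>r>0. \<forall>c. dist c d < r \<longrightarrow> c \<in> - spectrum x" by blast
qed

lemma bounded_spectrum: "bounded (spectrum x)"
  unfolding bounded_iff
proof (intro exI ballI)
  fix c assume c: "c \<in> spectrum x"
  show "cmod c \<le> 2 * norm x"
  proof (rule ccontr)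
    assume far: "\<not> cmod c \<le> 2 * norm x"
    then have "c \<noteq> 0" by auto
    then have inv: "- of_complex c * - of_complex (inverse c) = (1::'a)"
      "- of_complex (inverse c) * - of_complex c = (1::'a)"
      by (simp_all add: of_complex_mult[symmetric])
    have "norm x * norm (- of_complex (inverse c) :: 'a) \<le> 1/2"
      using far \<open>c \<noteq> 0\<close> by (simp add: norm_inverse norm_divide field_simps)
    then have "invertible_elem (- of_complex c + x)"
      using invertible_elem_add_small(1)[OF inv] by blast
    then show False using c by (simp add: in_spectrum_iff)
  qed
qed

lemma compact_spectrum: "compact (spectrum x)"
  using open_resolvent_set[of x] bounded_spectrum[of x]
  by (simp add: compact_eq_bounded_closed closed_def)

lemma continuous_on_resolvent: "continuous_on (- spectrum x) (resolvent x)"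
proof (intro continuous_at_imp_continuous_on ballI)
  fix d assume "d \<in> - spectrum x"
  then have d: "d \<notin> spectrum x" by simp
  define r where "r = 1 / (2 * norm (resolvent x d))"
  have "r > 0" using norm_resolvent_pos[OF d] by (simp add: r_def)
  then have "eventually (\<lambda>c. c \<in> ball d r) (at d)"
    using eventually_at_ball[of r d UNIV] by (simp add: eventually_mono)
  then have "eventually (\<lambda>c. norm (resolvent x c - resolvent x d)
      \<le> norm (c - d) * (2 * norm (resolvent x d) ^ 2)) (at d)"
  proof (rule eventually_mono)
    fix c assume "c \<in> ball d r"
    then have "cmod (c - d) * norm (resolvent x d) \<le> 1/2"
      using norm_resolvent_pos[OF d] by (simp add: r_def dist_norm norm_minus_commute field_simps)
    then show "norm (resolvent x c - resolvent x d) \<le> norm (c - d) * (2 * norm (resolvent x d) ^ 2)"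
      using resolvent_locally_lipschitz(2)[OF d] by (simp add: mult_ac)
  qed
  with LIM_zero[OF tendsto_ident_at]
  have "((\<lambda>c. resolvent x c - resolvent x d) \<longlongrightarrow> 0) (at d)"
    by (rule tendsto_0_le)
  then show "isCont (resolvent x) d"
    unfolding isCont_def by (rule LIM_zero_cancel)
qed

section \<open>A maximum principle for the norm of the resolvent\<close>

lemma sum_roots_of_unity_power:
  assumes "0 < k" "k < N"
  shows "(\<Sum>j<N. exp (2 * of_real pi * \<i> * of_nat j / of_nat N) ^ k) = 0"
proof -
  define z where "z = exp (2 * of_real pi * \<i> * of_nat k / of_nat N)"
  have "z \<noteq> 1"
    using assms complex_root_unity_eq_1[of N k] by (auto simp: z_def dest: dvd_imp_le)
  moreover have "z ^ N = 1"
    using assms complex_root_unity_eq_1[of N "k * N"]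
    by (simp add: z_def exp_of_nat_mult[symmetric] field_simps)
  moreover have "exp (2 * of_real pi * \<i> * of_nat j / of_nat N) ^ k = z ^ j" for j
    by (simp add: z_def exp_of_nat_mult[symmetric] field_simps)
  ultimately show ?thesis by (simp add: sum_gp_strict)
qed

lemma norm_sums_diff_first_le:
  fixes t :: "nat \<Rightarrow> 'a::banach"
  assumes t: "t sums A" and "0 < N"
    and gap: "\<And>k. 0 < k \<Longrightarrow> k < N \<Longrightarrow> t k = 0"
    and tail: "\<And>k. N \<le> k \<Longrightarrow> norm (t k) \<le> C * q ^ k"
    and q: "0 \<le> q" "q < 1"
  shows "norm (A - t 0) \<le> C * q ^ N / (1 - q)"
proof -
  define f where "f k = (if k = 0 then 0 else t k)" for k
  have "(\<lambda>k. t (Suc k)) sums (A - t 0)"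
    using t sums_Suc_iff[of t "A - t 0"] by simp
  then have "f sums (A - t 0)"
    using sums_Suc_iff[of f "A - t 0"] by (simp add: f_def)
  moreover have "f k = 0" if "k < N" for k
    using gap that by (simp add: f_def)
  ultimately have "(\<lambda>k. f (k + N)) sums (A - t 0)"
    by (simp add: sums_zero_iff_shift)
  then have shifted: "(\<lambda>k. t (k + N)) sums (A - t 0)"
    using \<open>0 < N\<close> by (simp add: f_def)
  have geometric: "(\<lambda>k. C * q ^ N * q ^ k) sums (C * q ^ N * (1 / (1 - q)))"
    using q by (intro sums_mult geometric_sums) simp
  have "norm (A - t 0) = norm (\<Sum>k. t (k + N))"
    using sums_unique[OF shifted] by simp
  also have "\<dots> \<le> (\<Sum>k. C * q ^ N * q ^ k)"
  proof (rule norm_suminf_le)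
    show "norm (t (k + N)) \<le> C * q ^ N * q ^ k" for k
      using tail[of "k + N"] by (simp add: power_add mult_ac)
  qed (use geometric sums_summable in blast)
  also have "\<dots> = C * q ^ N / (1 - q)"
    using sums_unique[OF geometric] by simp
  finally show ?thesis .
qed

lemma resolvent_power_series:
  assumes w: "w \<notin> spectrum x" and small: "cmod c * norm (resolvent x w) < 1"
  shows "(\<lambda>k. of_complex (c ^ k) * resolvent x w ^ Suc k) sums resolvent x (w + c)"
proof -
  define R where "R = resolvent x w"
  have commute: "R * of_complex (- c) = - (of_complex c * R)"
    by (simp add: of_complex_commute of_complex_minus)
  have shift: "(x - of_complex w) + of_complex (- c) = x - of_complex (w + c)"
    by (simp add: of_complex_add of_complex_minus)
  have "norm (R * of_complex (- c)) < 1"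
    unfolding commute norm_minus_cancel norm_of_complex_mult using small by (simp add: R_def)
  note inverse = elem_inverse_add(2)[OF resolvent_inverse[OF w] this[unfolded R_def], unfolded shift]
  have "norm (of_complex c * R) < 1"
    using small by (simp add: norm_of_complex_mult R_def)
  then have "(\<lambda>k. (of_complex c * R) ^ k * R) sums ((\<Sum>k. (of_complex c * R) ^ k) * R)"
    by (intro sums_mult2 summable_sums complete_algebra_summable_geometric)
  then show ?thesis
    using inverse commute
    by (simp add: resolvent_def power_of_complex_mult power_Suc2 power_commutes mult.assoc R_def)
qed

text \<open>Averaging the power series of the resolvent around \<open>w\<close> over the \<open>N\<close>-th roots of
  unity cancels all terms of order \<open>0 < k < N\<close>.\<close>

lemma resolvent_circle_sum:
  fixes x :: "'a::complex_banach_algebra" and N :: nat and \<rho> :: real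
  defines "\<zeta> \<equiv> \<lambda>j. exp (2 * of_real pi * \<i> * of_nat j / of_nat N)"
  assumes w: "w \<notin> spectrum x" and "0 < N" and "0 \<le> \<rho>"
    and small: "\<rho> * norm (resolvent x w) \<le> 1/2"
  shows "norm ((\<Sum>j<N. resolvent x (w + of_real \<rho> * \<zeta> j)) - of_nat N * resolvent x w)
    \<le> 2 * N * norm (resolvent x w) * (\<rho> * norm (resolvent x w)) ^ N"
proof -
  define R where "R = resolvent x w"
  define q where "q = \<rho> * norm R"
  define t where "t k = of_complex (\<Sum>j<N. (of_real \<rho> * \<zeta> j) ^ k) * R ^ Suc k" for k
  have q: "0 \<le> q" "q \<le> 1/2" using small \<open>0 \<le> \<rho>\<close> by (simp_all add: q_def R_def)
  have norm_point: "cmod (of_real \<rho> * \<zeta> j) = \<rho>" for j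
    using \<open>0 \<le> \<rho>\<close> by (simp add: \<zeta>_def norm_mult norm_exp)
  have "(\<lambda>k. \<Sum>j<N. of_complex ((of_real \<rho> * \<zeta> j) ^ k) * R ^ Suc k)
      sums (\<Sum>j<N. resolvent x (w + of_real \<rho> * \<zeta> j))"
    using q norm_point unfolding R_def
    by (intro sums_sum resolvent_power_series[OF w]) (simp add: q_def R_def)
  moreover have "(\<Sum>j<N. of_complex ((of_real \<rho> * \<zeta> j) ^ k) * R ^ Suc k) = t k" for k
    by (simp only: t_def of_complex_sum sum_distrib_right)
  ultimately have "t sums (\<Sum>j<N. resolvent x (w + of_real \<rho> * \<zeta> j))"
    by simp
  then have "norm ((\<Sum>j<N. resolvent x (w + of_real \<rho> * \<zeta> j)) - t 0)
      \<le> (N * norm R) * q ^ N / (1 - q)"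
  proof (rule norm_sums_diff_first_le[OF _ \<open>0 < N\<close>])
    show "t k = 0" if "0 < k" "k < N" for k
      using sum_roots_of_unity_power[OF that]
      by (simp add: t_def \<zeta>_def power_mult_distrib sum_distrib_left[symmetric])
    show "norm (t k) \<le> (N * norm R) * q ^ k" for k
    proof -
      have "cmod (\<Sum>j<N. (of_real \<rho> * \<zeta> j) ^ k) \<le> N * \<rho> ^ k"
        using norm_sum[of "\<lambda>j. (of_real \<rho> * \<zeta> j) ^ k" "{..<N}"]
        by (simp add: norm_power norm_point)
      moreover have "norm (R ^ Suc k) \<le> norm R ^ Suc k" by (rule norm_power_ineq)
      ultimately have "norm (t k) \<le> (N * \<rho> ^ k) * norm R ^ Suc k"
        unfolding t_def norm_of_complex_mult using \<open>0 \<le> \<rho>\<close> by (intro mult_mono) auto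
      then show ?thesis by (simp add: q_def power_mult_distrib mult_ac)
    qed
  qed (use q in auto)
  also have "\<dots> \<le> (N * norm R) * q ^ N * 2"
  proof -
    have "1 / (1 - q) \<le> 2" using q by (simp add: field_simps)
    then have "((N * norm R) * q ^ N) * (1 / (1 - q)) \<le> ((N * norm R) * q ^ N) * 2"
      by (rule mult_left_mono) (use q in simp)
    then show ?thesis by simp
  qed
  finally show ?thesis
    by (simp add: t_def R_def q_def of_complex_of_nat mult_ac)
qed

lemma norm_resolvent_sub_mean:
  assumes w: "w \<notin> spectrum x" and "0 < \<rho>" and small: "\<rho> * norm (resolvent x w) \<le> 1/2"
    and circle: "\<And>c. cmod c = \<rho> \<Longrightarrow> norm (resolvent x (w + c)) \<le> norm (resolvent x w)"
  shows "norm (resolvent x w) \<le> norm (resolvent x (w + of_real \<rho>))"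
proof -
  define n where "n = norm (resolvent x w)"
  define q where "q = \<rho> * n"
  have q: "0 \<le> q" "q \<le> 1/2" using small \<open>0 < \<rho>\<close> by (simp_all add: q_def n_def)
  have bound: "n - norm (resolvent x (w + of_real \<rho>)) \<le> 2 * n * (of_nat N * q ^ N)" if "0 < N" for N
  proof -
    define \<zeta> where "\<zeta> j = exp (2 * of_real pi * \<i> * of_nat j / of_nat N)" for j
    define S where "S = (\<Sum>j<N. resolvent x (w + of_real \<rho> * \<zeta> j))"
    have "N * n = norm (of_complex (of_nat N) * resolvent x w)"
      by (simp add: norm_of_complex_mult n_def)
    also have "\<dots> \<le> norm S + norm (S - of_nat N * resolvent x w)"
      using norm_triangle_ineq4[of S "S - of_nat N * resolvent x w"] by (simp add: of_complex_of_nat)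
    also have "norm (S - of_nat N * resolvent x w) \<le> 2 * N * n * q ^ N"
      using resolvent_circle_sum[OF w \<open>0 < N\<close>] \<open>0 < \<rho>\<close> small
      by (simp add: S_def \<zeta>_def n_def q_def)
    also have "norm S \<le> (\<Sum>j<N. norm (resolvent x (w + of_real \<rho> * \<zeta> j)))"
      unfolding S_def by (rule norm_sum)
    also have "\<dots> = norm (resolvent x (w + of_real \<rho>))
        + (\<Sum>j\<in>{..<N} - {0}. norm (resolvent x (w + of_real \<rho> * \<zeta> j)))"
      using \<open>0 < N\<close> by (simp add: sum.remove[of "{..<N}" 0] \<zeta>_def)
    also have "(\<Sum>j\<in>{..<N} - {0}. norm (resolvent x (w + of_real \<rho> * \<zeta> j))) \<le> (N - 1) * n"
      using sum_bounded_above[of "{..<N} - {0}" _ n] circle \<open>0 < \<rho>\<close> \<open>0 < N\<close>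
      by (simp add: \<zeta>_def n_def norm_mult norm_exp)
    finally show ?thesis using \<open>0 < N\<close> by (simp add: of_nat_diff algebra_simps)
  qed
  have "(\<lambda>N. 2 * n * (of_nat N * q ^ N)) \<longlonglongrightarrow> 2 * n * 0"
    using q by (intro tendsto_mult tendsto_const powser_times_n_limit_0) simp
  then have "n - norm (resolvent x (w + of_real \<rho>)) \<le> 2 * n * 0"
  proof (rule LIMSEQ_le_const)
    show "\<exists>N. \<forall>m\<ge>N. n - norm (resolvent x (w + of_real \<rho>)) \<le> 2 * n * (of_nat m * q ^ m)"
      using bound by (intro exI[of _ 1]) simp
  qed
  then show ?thesis by (simp add: n_def)
qed

lemma norm_resolvent_local_max_shift:
  assumes w: "w \<notin> spectrum x" and "0 < r"
    and local_max: "\<And>c. cmod c < r \<Longrightarrow> norm (resolvent x (w + c)) \<le> norm (resolvent x w)"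
  obtains \<rho> where "0 < \<rho>" "\<rho> < r" "norm (resolvent x (w + of_real \<rho>)) = norm (resolvent x w)"
proof
  define n where "n = norm (resolvent x w)"
  have "0 < n" using norm_resolvent_pos[OF w] by (simp add: n_def)
  define \<rho> where "\<rho> = min (r / 2) (1 / (2 * n))"
  show "0 < \<rho>" "\<rho> < r" using \<open>0 < r\<close> \<open>0 < n\<close> by (simp_all add: \<rho>_def)
  have "\<rho> * n \<le> 1/2"
    using \<open>0 < n\<close> by (simp add: \<rho>_def min_def field_simps)
  then have "n \<le> norm (resolvent x (w + of_real \<rho>))"
    using norm_resolvent_sub_mean[OF w \<open>0 < \<rho>\<close>] local_max \<open>\<rho> < r\<close> by (simp add: n_def)
  moreover have "norm (resolvent x (w + of_real \<rho>)) \<le> n"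
    using local_max[of "of_real \<rho>"] \<open>0 < \<rho>\<close> \<open>\<rho> < r\<close> by (simp add: n_def)
  ultimately show "norm (resolvent x (w + of_real \<rho>)) = norm (resolvent x w)"
    by (simp add: n_def)
qed

text \<open>Among the maximisers, one with the largest real part cannot be interior to \<open>G\<close>:
  \<open>norm_resolvent_local_max_shift\<close> would produce a maximiser further right.\<close>

lemma norm_resolvent_max_outside_open:
  assumes K: "compact K" "K \<noteq> {}" "K \<inter> spectrum x = {}" and G: "open G" "G \<subseteq> K"
  obtains w where "w \<in> K - G" "\<And>z. z \<in> K \<Longrightarrow> norm (resolvent x z) \<le> norm (resolvent x w)"
proof -
  have cont: "continuous_on K (\<lambda>z. norm (resolvent x z))"
    using K(3) by (intro continuous_on_norm continuous_on_subset[OF continuous_on_resolvent]) auto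
  obtain z0 where z0: "z0 \<in> K" "\<forall>z\<in>K. norm (resolvent x z) \<le> norm (resolvent x z0)"
    using continuous_attains_sup[OF K(1,2) cont] by blast
  define M where "M = {z \<in> K. norm (resolvent x z) = norm (resolvent x z0)}"
  have "closedin (top_of_set K) M"
    unfolding M_def by (rule continuous_closedin_preimage_constant[OF cont])
  then have "compact M" using K(1) closedin_compact by blast
  moreover have "M \<noteq> {}" using z0 by (auto simp: M_def)
  moreover have "continuous_on M Re" by (intro continuous_intros)
  ultimately obtain w where w: "w \<in> M" "\<forall>z\<in>M. Re z \<le> Re w"
    by (rule continuous_attains_sup[elim_format]) blast
  have "w \<notin> G"
  proof
    assume "w \<in> G"
    then obtain r where "0 < r" "ball w r \<subseteq> G" using G(1) open_contains_ball by blast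
    have near: "w + c \<in> K" if "cmod c < r" for c
    proof -
      have "w + c \<in> ball w r" using that by (simp add: dist_norm)
      then show ?thesis using \<open>ball w r \<subseteq> G\<close> G(2) by blast
    qed
    have "w \<notin> spectrum x" using w(1) K(3) by (auto simp: M_def)
    moreover have "norm (resolvent x (w + c)) \<le> norm (resolvent x w)" if "cmod c < r" for c
      using z0(2) near[OF that] w(1) by (simp add: M_def)
    ultimately obtain \<rho> where "0 < \<rho>" "\<rho> < r"
        and "norm (resolvent x (w + of_real \<rho>)) = norm (resolvent x w)"
      using norm_resolvent_local_max_shift[OF _ \<open>0 < r\<close>] by blast
    then have "w + of_real \<rho> \<in> M" using near[of "of_real \<rho>"] w(1) by (simp add: M_def)
    then show False using w(2) \<open>0 < \<rho>\<close> by fastforce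
  qed
  then show thesis using w(1) z0 by (intro that[of w]) (auto simp: M_def)
qed

section \<open>Spectra of nearby elements\<close>

lemma component_isolating_neighbourhood:
  fixes S B :: "'a::euclidean_space set"
  assumes S: "compact S" "z \<in> S" and B: "closed B" "connected_component_set S z \<inter> B = {}"
  obtains G where "open G" "bounded G" "z \<in> G" "frontier G \<inter> S = {}" "closure G \<inter> B = {}"
proof -
  have component: "connected_component_set S z \<in> components S"
    using S(2) by (auto simp: components_iff)
  have "open (- B)" "connected_component_set S z \<subseteq> - B"
    using B by (auto simp: open_Compl)
  then obtain K where K: "openin (top_of_set S) K" "compact K"
      "connected_component_set S z \<subseteq> K" "K \<subseteq> - B"
    by (rule Sura_Bura_clopen_subset[OF closed_imp_locally_compact[OF compact_imp_closed[OF S(1)]]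
        component compact_components[OF S(1) component]])
  obtain T where "open T" "K = S \<inter> T" using K(1) by (auto simp: openin_open)
  then have "closed (S - K)"
    using S(1) by (simp add: Diff_Int closed_Diff compact_imp_closed)
  then have "closed ((S - K) \<union> B)" using B(1) by blast
  moreover have "K \<inter> ((S - K) \<union> B) = {}" using K(4) by blast
  ultimately obtain U V where "open U" "compact (closure U)" "open V"
      "K \<subseteq> U" "(S - K) \<union> B \<subseteq> V" "U \<inter> V = {}"
    by (rule separation_normal_compact[OF K(2)])
  have "closure U \<inter> V = {}"
    using \<open>open V\<close> \<open>U \<inter> V = {}\<close> open_Int_closure_eq_empty by blast
  moreover have "frontier U \<subseteq> closure U - K"
    using \<open>open U\<close> \<open>K \<subseteq> U\<close> by (auto simp: frontier_def interior_open)
  ultimately have "frontier U \<inter> S = {}" "closure U \<inter> B = {}"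
    using \<open>(S - K) \<union> B \<subseteq> V\<close> by blast+
  moreover have "z \<in> U"
    using S(2) K(3) \<open>K \<subseteq> U\<close> connected_component_refl by blast
  ultimately show thesis
    using \<open>open U\<close> \<open>compact (closure U)\<close> by (intro that[of U]) simp_all
qed

lemma connected_component_subset_frontier_disjoint:
  assumes "z \<in> G" "frontier G \<inter> S = {}"
  shows "connected_component_set S z \<subseteq> G"
proof (rule ccontr)
  assume not_subset: "\<not> connected_component_set S z \<subseteq> G"
  then have "z \<in> S" using connected_component_eq_empty by blast
  then have "z \<in> connected_component_set S z \<inter> G" using assms(1) by simp
  moreover have "connected_component_set S z - G \<noteq> {}" using not_subset by blast
  ultimately have "connected_component_set S z \<inter> frontier G \<noteq> {}"
    by (intro connected_Int_frontier connected_connected_component) blast+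
  then show False using assms(2) connected_component_subset by blast
qed

lemma eventually_resolvent_bounded:
  assumes "b \<longlonglongrightarrow> a" "compact Q" "Q \<inter> spectrum a = {}"
  obtains M where "eventually (\<lambda>n. norm (a - b n) * M \<le> 1/2
    \<and> (\<forall>q\<in>Q. q \<notin> spectrum (b n) \<and> norm (resolvent (b n) q) \<le> M)) sequentially"
proof -
  have "compact (resolvent a ` Q)"
    using assms(2,3) by (intro compact_continuous_image continuous_on_subset[OF continuous_on_resolvent]) auto
  then have "bounded (resolvent a ` Q)" by (rule compact_imp_bounded)
  then obtain B where "0 < B" and B: "\<And>q. q \<in> Q \<Longrightarrow> norm (resolvent a q) \<le> B"
    unfolding bounded_pos by blast
  then have "eventually (\<lambda>n. dist (b n) a < 1 / (4 * B)) sequentially"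
    using assms(1) by (intro tendstoD) simp_all
  then have "eventually (\<lambda>n. norm (a - b n) * (2 * B) \<le> 1/2
      \<and> (\<forall>q\<in>Q. q \<notin> spectrum (b n) \<and> norm (resolvent (b n) q) \<le> 2 * B)) sequentially"
  proof (rule eventually_mono)
    fix n assume "dist (b n) a < 1 / (4 * B)"
    then have near: "norm (b n - a) * B \<le> 1/4"
      using \<open>0 < B\<close> by (simp add: dist_norm field_simps)
    have "q \<notin> spectrum (b n) \<and> norm (resolvent (b n) q) \<le> 2 * B" if "q \<in> Q" for q
    proof -
      have "norm (b n - a) * norm (resolvent a q) \<le> norm (b n - a) * B"
        using B[OF that] by (simp add: mult_left_mono)
      then have "norm (b n - a) * norm (resolvent a q) \<le> 1/2" using near by linarith
      moreover have "q \<notin> spectrum a" using that assms(3) by blast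
      ultimately show ?thesis using resolvent_perturb[of q a "b n"] B[OF that] by linarith
    qed
    moreover have "norm (a - b n) * (2 * B) \<le> 1/2" using near by (simp add: norm_minus_commute)
    ultimately show "norm (a - b n) * (2 * B) \<le> 1/2
      \<and> (\<forall>q\<in>Q. q \<notin> spectrum (b n) \<and> norm (resolvent (b n) q) \<le> 2 * B)" by blast
  qed
  then show thesis by (rule that)
qed

lemma spectrum_meets_open_of_frontier_bound:
  assumes G: "open G" "bounded G" and z: "z \<in> G" "z \<in> spectrum a"
    and frontier: "\<And>q. q \<in> frontier G \<Longrightarrow> q \<notin> spectrum x \<and> norm (resolvent x q) \<le> M"
    and near: "norm (a - x) * M \<le> 1/2"
  shows "G \<inter> spectrum x \<noteq> {}"
proof
  assume disjoint: "G \<inter> spectrum x = {}"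
  have "frontier G = closure G - G" using G(1) by (simp add: frontier_def interior_open)
  then have "closure G \<inter> spectrum x = {}" using disjoint frontier by blast
  moreover have "closure G \<noteq> {}" using z(1) closure_subset by blast
  ultimately obtain w where "w \<in> closure G - G"
      and max: "\<And>q. q \<in> closure G \<Longrightarrow> norm (resolvent x q) \<le> norm (resolvent x w)"
    using norm_resolvent_max_outside_open[OF _ _ _ G(1) closure_subset] G(2) by auto
  have "norm (resolvent x z) \<le> norm (resolvent x w)"
    using max z(1) closure_subset by blast
  also have "\<dots> \<le> M"
    using frontier \<open>w \<in> closure G - G\<close> \<open>frontier G = closure G - G\<close> by blast
  finally have "norm (a - x) * norm (resolvent x z) \<le> norm (a - x) * M"
    by (simp add: mult_left_mono)
  then have "norm (a - x) * norm (resolvent x z) \<le> 1/2" using near by linarith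
  moreover have "z \<notin> spectrum x" using z(1) disjoint by blast
  ultimately have "z \<notin> spectrum a" using resolvent_perturb(1) by blast
  then show False using z(2) by blast
qed

theorem proposition4p08:
  fixes a :: "'a::complex_banach_algebra" and b :: "nat \<Rightarrow> 'a"
  assumes "b \<longlonglongrightarrow> a"
    and "\<And>n. n \<ge> 1 \<Longrightarrow>
           \<forall>z\<in>spectrum (b n). connected_component_set (spectrum (b n)) z \<inter> spectrum (- b n) \<noteq> {}"
  shows "\<forall>z\<in>spectrum a. connected_component_set (spectrum a) z \<inter> spectrum (- a) \<noteq> {}"
proof (intro ballI notI)
  fix z assume z: "z \<in> spectrum a"
    and isolated: "connected_component_set (spectrum a) z \<inter> spectrum (- a) = {}"
  obtain G where G: "open G" "bounded G" "z \<in> G" "frontier G \<inter> spectrum a = {}"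
      "closure G \<inter> spectrum (- a) = {}"
    using component_isolating_neighbourhood[OF compact_spectrum z _ isolated]
      compact_spectrum[THEN compact_imp_closed] by blast
  define Q where "Q = frontier G \<union> uminus ` closure G"
  have "compact Q" using G(2) by (auto simp: Q_def compact_negations)
  moreover have "Q \<inter> spectrum a = {}" using G(4,5) by (force simp: Q_def spectrum_uminus)
  ultimately obtain M where "eventually (\<lambda>n. norm (a - b n) * M \<le> 1/2
      \<and> (\<forall>q\<in>Q. q \<notin> spectrum (b n) \<and> norm (resolvent (b n) q) \<le> M)) sequentially"
    using eventually_resolvent_bounded[OF assms(1)] by blast
  then have "eventually (\<lambda>n. n \<ge> 1 \<and> norm (a - b n) * M \<le> 1/2
      \<and> (\<forall>q\<in>Q. q \<notin> spectrum (b n) \<and> norm (resolvent (b n) q) \<le> M)) sequentially"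
    by (rule eventually_conj[OF eventually_ge_at_top])
  then obtain n where "n \<ge> 1" and near: "norm (a - b n) * M \<le> 1/2"
    and outside: "\<And>q. q \<in> Q \<Longrightarrow> q \<notin> spectrum (b n) \<and> norm (resolvent (b n) q) \<le> M"
    using eventually_happens'[OF sequentially_bot] by blast
  then have "G \<inter> spectrum (b n) \<noteq> {}"
    using spectrum_meets_open_of_frontier_bound[OF G(1-3) z _ near] by (simp add: Q_def)
  then obtain \<mu> where "\<mu> \<in> G" "\<mu> \<in> spectrum (b n)" by blast
  then obtain \<nu> where \<nu>: "\<nu> \<in> connected_component_set (spectrum (b n)) \<mu>" "- \<nu> \<in> spectrum (b n)"
    using assms(2)[OF \<open>n \<ge> 1\<close>] by (force simp: spectrum_uminus)
  have "\<nu> \<in> G"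
    using connected_component_subset_frontier_disjoint[OF \<open>\<mu> \<in> G\<close>] \<nu>(1) outside by (auto simp: Q_def)
  then have "- \<nu> \<in> Q" using closure_subset by (auto simp: Q_def)
  then show False using outside \<nu>(2) by blast
qed

end
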